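(* Let $h>0$ and let $T_h$ be the complete binary tree of height $h$ (with $2^{h+1}-1$ nodes), viewed as a Cartesian tree. Then $|ng(T_h)|=6(2^h-1)-2h$.
   Context: Heights are counted so that a single leaf is the complete binary tree of height $0$. Sequences are finite sequences of pairwise distinct integers indexed from $1$. The Cartesian tree $C(x)$ of a sequence $x$ of length $n$ is empty if $n=0$; otherwise, if $x[i]$ is the minimum of $x$, it is the binary tree with root $i$, left subtree $C(x[1\ldots i-1])$ and right subtree $C(x[i+1\ldots n])$; every binary tree with $n$ nodes is a Cartesian tree. For $1\le i\le n-1$, $\tau(x,i)$ is obtained from $x$ by exchanging $x[i]$ and $x[i+1]$. For a Cartesian tree $T$ with $n$ nodes, $ng(T,i)=\{C(\tau(x,i)) : C(x)=T\}$ for $1\le i\le n-1$ and $ng(T)=\bigcup_{i=1}^{n-1}ng(T,i)$. *)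

theory Defs
  imports "HOL-Library.Tree"
begin

text \<open>Cartesian trees. Nodes are labelled by (1-based) positions; the extra
  argument is an offset added to positions, so that the subtree of a
  subsequence x[a+1..b] carries the labels a+1..b.\<close>

lemma takeWhile_len_less_aux:
  "x \<in> set xs \<Longrightarrow> \<not> P x \<Longrightarrow> length (takeWhile P xs) < length xs"
  by (induction xs) auto

lemma takeWhile_neq_Min_less:
  "length (takeWhile (\<lambda>z. z \<noteq> Min (set (y # ys))) (y # ys)) < length (y # ys)"
  by (rule takeWhile_len_less_aux[of "Min (set (y # ys))"]) (simp_all del: list.set add: Min_in)

function cart_off :: "int list \<Rightarrow> nat \<Rightarrow> nat tree" where
  "cart_off [] off = Leaf"
| "cart_off (y # ys) off =
     (let xs = y # ys;
          i = length (takeWhile (\<lambda>z. z \<noteq> Min (set xs)) xs)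
      in Node (cart_off (take i xs) off) (off + i + 1)
              (cart_off (drop (Suc i) xs) (off + i + 1)))"
  by pat_completeness auto
termination
proof (relation "measure (\<lambda>(xs, _). length xs)")
  fix y ys off x i
  assume "x = y # ys" "i = length (takeWhile (\<lambda>z. z \<noteq> Min (set x)) x)"
  then have "i < length x" using takeWhile_neq_Min_less[of y ys] by (simp only:)
  then show "((take i x, off), y # ys, off) \<in> measure (\<lambda>(xs, _). length xs)"
    and "((drop (Suc i) x, off + i + 1), y # ys, off) \<in> measure (\<lambda>(xs, _). length xs)"
    using \<open>x = y # ys\<close> by auto
qed auto

definition cart :: "int list \<Rightarrow> nat tree" where
  "cart x = cart_off x 0"

text \<open>tau(x,i): exchange x[i] and x[i+1] (1-based positions, 1 \<le> i \<le> n-1).\<close>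
definition tau :: "int list \<Rightarrow> nat \<Rightarrow> int list" where
  "tau x i = x[i - 1 := x ! i, i := x ! (i - 1)]"

definition ng_i :: "nat tree \<Rightarrow> nat \<Rightarrow> nat tree set" where
  "ng_i T i = {cart (tau x i) | x. distinct x \<and> cart x = T}"

definition ng :: "nat tree \<Rightarrow> nat tree set" where
  "ng T = (\<Union>i\<in>{1..size T - 1}. ng_i T i)"

text \<open>Complete binary tree with k levels (library height k), in-order labels off+1..off+2^k-1.
  The paper's complete binary tree of height h (a single leaf has height 0) is cbt (h+1) 0.\<close>
fun cbt :: "nat \<Rightarrow> nat \<Rightarrow> nat tree" where
  "cbt 0 off = Leaf"
| "cbt (Suc k) off = Node (cbt k off) (off + 2 ^ k) (cbt k (off + 2 ^ k))"

end

theory Submission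
  imports Defs
begin

text \<open>Any sequence x realising T = Node l k r splits as x = xl @ m # xr at its minimum m. A swap
  inside xl or inside xr only changes the corresponding subtree, so these positions contribute a
  copy of ng l and a copy of ng r. Swapping m with the last entry y of xl gives
  Node (l without its rightmost node) (k - 1) C(y # xr), where C(y # xr) ranges over the trees
  obtained from r by a new first entry: one for each node of the left spine of r, plus one.
  Swapping m with the first entry of xr is symmetric. The four families are disjoint: they differ
  at the root, and a swap never fixes the Cartesian tree. The spines of T_{h-1} have h nodes, so
  a(h) = |ng T_h| satisfies a(h) = 2 a(h-1) + 2 (h + 1) and a(0) = 0, whence a(h) = 6 (2^h - 1) - 2h.
  The sequences realising the four families are glued from given ones after strictly monotone
  relabellings, which do not change Cartesian trees.\<close>

(* Once append is normalised to a Cons, cart_off.simps(2) would rewrite cart_off (xl @ m # xr)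
  before cart_off_append_min can apply. *)
declare cart_off.simps(2) [simp del]

lemma cart_off_append_min:
  fixes xl xr :: "int list"
  assumes "\<forall>v\<in>set xl \<union> set xr. m < v"
  shows "cart_off (xl @ m # xr) off
     = Node (cart_off xl off) (off + length xl + 1) (cart_off xr (off + length xl + 1))"
proof -
  let ?xs = "xl @ m # xr"
  have M: "Min (set ?xs) = m" using assms by (intro Min_eqI) (auto intro: less_imp_le)
  have T: "takeWhile (\<lambda>z. z \<noteq> m) ?xs = xl" using assms by (subst takeWhile_append2) auto
  obtain y ys where E: "?xs = y # ys" by (cases xl) auto
  have "cart_off ?xs off = cart_off (y # ys) off" by (simp only: E)
  also have "\<dots> = Node (cart_off (take (length xl) ?xs) off) (off + length xl + 1)
      (cart_off (drop (Suc (length xl)) ?xs) (off + length xl + 1))"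
    unfolding cart_off.simps(2) Let_def unfolding E[symmetric] M T ..
  also have "\<dots> = Node (cart_off xl off) (off + length xl + 1) (cart_off xr (off + length xl + 1))"
    by simp
  finally show ?thesis .
qed

lemma cart_off_Cons_min:
  "\<forall>v\<in>set xr. m < v \<Longrightarrow> cart_off (m # xr) off = Node Leaf (Suc off) (cart_off xr (Suc off))"
  using cart_off_append_min[of "[]" xr m off] by simp

lemma cart_off_snoc_min:
  "\<forall>v\<in>set xl. m < v
    \<Longrightarrow> cart_off (xl @ [m]) off = Node (cart_off xl off) (off + length xl + 1) Leaf"
  using cart_off_append_min[of xl "[]" m off] by simp

lemma split_at_Min:
  fixes x :: "int list"
  assumes "distinct x" "x \<noteq> []"
  obtains xl m xr where "x = xl @ m # xr" "\<forall>v\<in>set xl \<union> set xr. m < v"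
proof -
  define m where "m = Min (set x)"
  have "m \<in> set x" using assms(2) unfolding m_def by simp
  then obtain xl xr where x: "x = xl @ m # xr" by (meson split_list)
  have "m < v" if "v \<in> set xl \<union> set xr" for v
  proof -
    have "v \<in> set x" "v \<noteq> m" using that assms(1) x by auto
    moreover from \<open>v \<in> set x\<close> have "m \<le> v" unfolding m_def by simp
    ultimately show ?thesis by simp
  qed
  with x show thesis by (intro that) auto
qed

lemma distinct_min_induct [consumes 1, case_names Nil split_min]:
  fixes x :: "int list"
  assumes "distinct x"
    and Nil: "P []"
    and split_min: "\<And>xl m xr. distinct (xl @ m # xr) \<Longrightarrow> \<forall>v\<in>set xl \<union> set xr. m < v
      \<Longrightarrow> P xl \<Longrightarrow> P xr \<Longrightarrow> P (xl @ m # xr)"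
  shows "P x"
  using assms(1)
proof (induction "length x" arbitrary: x rule: less_induct)
  case less
  show ?case
  proof (cases "x = []")
    case True
    with Nil show ?thesis by simp
  next
    case False
    then obtain xl m xr where x: "x = xl @ m # xr" and min: "\<forall>v\<in>set xl \<union> set xr. m < v"
      using split_at_Min less.prems by blast
    have "P xl" "P xr" using less x by auto
    with split_min less.prems min show ?thesis unfolding x by blast
  qed
qed

lemma cart_off_eq_Leaf_iff: "cart_off x off = Leaf \<longleftrightarrow> x = []"
  by (cases x) (simp_all add: cart_off.simps(2) Let_def)

lemma size_cart_off: "distinct x \<Longrightarrow> size (cart_off x off) = length x"
  by (induction x arbitrary: off rule: distinct_min_induct) (simp_all add: cart_off_append_min)

lemma cart_off_eq_NodeE:
  assumes "distinct x" "cart_off x off = Node l k r"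
  obtains xl m xr where "x = xl @ m # xr" "\<forall>v\<in>set xl \<union> set xr. m < v"
    "cart_off xl off = l" "k = off + length xl + 1" "cart_off xr k = r"
proof -
  have "x \<noteq> []" using assms(2) by auto
  then obtain xl m xr where "x = xl @ m # xr" "\<forall>v\<in>set xl \<union> set xr. m < v"
    using split_at_Min assms(1) by blast
  with assms(2) show thesis by (intro that) (auto simp: cart_off_append_min)
qed

lemma cart_off_map_strict_mono:
  fixes x :: "int list" and f :: "int \<Rightarrow> int"
  assumes "strict_mono f" "distinct x"
  shows "cart_off (map f x) off = cart_off x off"
  using assms(2)
proof (induction x arbitrary: off rule: distinct_min_induct)
  case (split_min xl m xr)
  then have "\<forall>v\<in>set (map f xl) \<union> set (map f xr). f m < v"
    using assms(1) by (auto simp: strict_mono_less)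
  with split_min show ?case by (simp add: cart_off_append_min)
qed simp

fun del_leftmost :: "'a tree \<Rightarrow> 'a tree" where
  "del_leftmost Leaf = Leaf"
| "del_leftmost (Node l a r) = (if l = Leaf then r else Node (del_leftmost l) a r)"

fun del_rightmost :: "'a tree \<Rightarrow> 'a tree" where
  "del_rightmost Leaf = Leaf"
| "del_rightmost (Node l a r) = (if r = Leaf then l else Node l a (del_rightmost r))"

lemma cart_off_tl:
  "distinct x \<Longrightarrow> cart_off (tl x) (Suc off) = del_leftmost (cart_off x off)"
proof (induction x arbitrary: off rule: distinct_min_induct)
  case (split_min xl m xr)
  show ?case
  proof (cases xl)
    case Nil
    with split_min show ?thesis by (simp add: cart_off_Cons_min)
  next
    case (Cons a xl')
    then have "tl (xl @ m # xr) = xl' @ m # xr" by simp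
    moreover have "\<forall>v\<in>set xl' \<union> set xr. m < v" using split_min.hyps(2) Cons by auto
    ultimately show ?thesis
      using Cons split_min.IH(1)[of off] cart_off_append_min[OF split_min.hyps(2), of off]
      by (simp add: cart_off_append_min cart_off_eq_Leaf_iff)
  qed
qed simp

lemma cart_off_butlast:
  "distinct x \<Longrightarrow> cart_off (butlast x) off = del_rightmost (cart_off x off)"
proof (induction x arbitrary: off rule: distinct_min_induct)
  case (split_min xl m xr)
  show ?case
  proof (cases "xr = []")
    case True
    with split_min show ?thesis by (simp add: cart_off_snoc_min)
  next
    case False
    have "\<forall>v\<in>set xl \<union> set (butlast xr). m < v"
      using split_min.hyps(2) by (auto dest: in_set_butlastD)
    with False split_min show ?thesis by (simp add: cart_off_append_min cart_off_eq_Leaf_iff butlast_append)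
  qed
qed simp

lemma length_tau [simp]: "length (tau xs i) = length xs"
  by (simp add: tau_def)

lemma set_tau: "1 \<le> i \<Longrightarrow> i < length xs \<Longrightarrow> set (tau xs i) = set xs"
  by (simp add: tau_def)

lemma distinct_tau: "1 \<le> i \<Longrightarrow> i < length xs \<Longrightarrow> distinct (tau xs i) = distinct xs"
  by (simp add: tau_def)

lemma map_tau: "i < length xs \<Longrightarrow> tau (map f xs) i = map f (tau xs i)"
  by (simp add: tau_def map_update)

lemma tau_append_left: "1 \<le> i \<Longrightarrow> i < length xs \<Longrightarrow> tau (xs @ ys) i = tau xs i @ ys"
  by (simp add: tau_def nth_append list_update_append1 less_imp_diff_less)

lemma tau_append_right: "1 \<le> j \<Longrightarrow> tau (xs @ ys) (length xs + j) = xs @ tau ys j"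
  by (cases j) (simp_all add: tau_def nth_append list_update_append)

lemma tau_middle: "tau (xs @ a # b # ys) (Suc (length xs)) = xs @ b # a # ys"
  by (simp add: tau_def nth_append list_update_append)

lemma cart_off_tau_left:
  assumes "\<forall>v\<in>set xl \<union> set xr. m < v" "1 \<le> i" "i < length xl"
  shows "cart_off (tau (xl @ m # xr) i) off
    = Node (cart_off (tau xl i) off) (off + length xl + 1) (cart_off xr (off + length xl + 1))"
  using assms cart_off_append_min[of "tau xl i" xr m off] by (simp add: tau_append_left set_tau)

lemma cart_off_tau_right:
  assumes "\<forall>v\<in>set xl \<union> set xr. m < v" "1 \<le> j" "j < length xr"
  shows "cart_off (tau (xl @ m # xr) (length xl + 1 + j)) off
    = Node (cart_off xl off) (off + length xl + 1) (cart_off (tau xr j) (off + length xl + 1))"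
  using assms cart_off_append_min[of xl "tau xr j" m off] tau_append_right[of j "xl @ [m]" xr]
  by (simp add: set_tau)

lemma cart_off_tau_before_min:
  assumes "\<forall>v\<in>set xl \<union> set xr. m < v" "distinct xl" "xl \<noteq> []"
  shows "cart_off (tau (xl @ m # xr) (length xl)) off
    = Node (del_rightmost (cart_off xl off)) (off + length xl) (cart_off (last xl # xr) (off + length xl))"
proof -
  obtain ys y where xl: "xl = ys @ [y]" using assms(3) by (cases xl rule: rev_exhaust) auto
  have "tau (xl @ m # xr) (length xl) = ys @ m # y # xr" using tau_middle[of ys y m xr] xl by simp
  moreover have "\<forall>v\<in>set ys \<union> set (y # xr). m < v" using assms(1) xl by auto
  ultimately show ?thesis
    using cart_off_append_min[of ys "y # xr" m off] cart_off_butlast[OF assms(2), of off] xl by simp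
qed

lemma cart_off_tau_after_min:
  assumes "\<forall>v\<in>set xl \<union> set xr. m < v" "distinct xr" "xr \<noteq> []"
  shows "cart_off (tau (xl @ m # xr) (length xl + 1)) off
    = Node (cart_off (xl @ [hd xr]) off) (off + length xl + 2) (del_leftmost (cart_off xr (off + length xl + 1)))"
proof -
  have "tau (xl @ m # xr) (length xl + 1) = (xl @ [hd xr]) @ m # tl xr"
    using tau_middle[of xl m "hd xr" "tl xr"] assms(3) by simp
  moreover have "\<forall>v\<in>set (xl @ [hd xr]) \<union> set (tl xr). m < v"
    using assms(1,3) by (auto dest: list.set_sel)
  ultimately show ?thesis
    using cart_off_append_min[of "xl @ [hd xr]" "tl xr" m off]
      cart_off_tl[OF assms(2), of "off + length xl + 1"] by simp
qed

text \<open>A swap next to the minimum moves the root label; any other swap acts inside a subtree.\<close>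
lemma cart_off_tau_neq:
  "distinct x \<Longrightarrow> 1 \<le> i \<Longrightarrow> i < length x \<Longrightarrow> cart_off (tau x i) off \<noteq> cart_off x off"
proof (induction x arbitrary: off i rule: distinct_min_induct)
  case (split_min xl m xr)
  note min = split_min.hyps(2) and bounds = split_min.prems
  let ?k = "off + length xl + 1"
  have dl: "distinct xl" and dr: "distinct xr" using split_min.hyps(1) by auto
  have root: "cart_off (xl @ m # xr) off = Node (cart_off xl off) ?k (cart_off xr ?k)"
    by (rule cart_off_append_min[OF min])
  consider "i < length xl" | "i = length xl" | "i = length xl + 1" | "length xl + 1 < i"
    by linarith
  then show ?case
  proof cases
    case 1
    then show ?thesis
      using cart_off_tau_left[OF min bounds(1) 1] split_min.IH(1)[OF bounds(1) 1] root by simp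
  next
    case 2
    then have "xl \<noteq> []" using bounds(1) by auto
    with 2 show ?thesis using cart_off_tau_before_min[OF min dl] root by simp
  next
    case 3
    then have "xr \<noteq> []" using bounds(2) by auto
    with 3 show ?thesis using cart_off_tau_after_min[OF min dr] root by simp
  next
    case 4
    define j where "j = i - length xl - 1"
    have j: "i = length xl + 1 + j" "1 \<le> j" "j < length xr" using 4 bounds(2) unfolding j_def by auto
    then show ?thesis
      using cart_off_tau_right[OF min j(2,3)] split_min.IH(2)[OF j(2,3)] root by simp
  qed
qed simp

definition cart_realizable :: "nat \<Rightarrow> nat tree \<Rightarrow> bool" where
  "cart_realizable off T \<longleftrightarrow> (\<exists>x. distinct x \<and> cart_off x off = T)"

lemma list_strict_lower_bound:
  fixes xs :: "int list"
  obtains m where "\<forall>v\<in>set xs. m < v"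
proof -
  obtain b where "\<forall>v\<in>set xs. b \<le> v" using bdd_below_finite[of "set xs"] by (auto simp: bdd_below_def)
  then have "\<forall>v\<in>set xs. b - 1 < v" by fastforce
  then show thesis by (rule that)
qed

lemma distinct_glue:
  fixes xa xb :: "int list"
  assumes "distinct xa" "distinct xb"
  obtains c m where "distinct (xa @ m # map (\<lambda>v. v + c) xb)"
    "\<forall>v\<in>set xa \<union> set (map (\<lambda>v. v + c) xb). m < v"
proof -
  obtain M where M: "\<forall>u\<in>set xa. u \<le> M" using bdd_above_finite[of "set xa"] by (auto simp: bdd_above_def)
  obtain b where b: "\<forall>v\<in>set xb. b < v" using list_strict_lower_bound by blast
  let ?xb = "map (\<lambda>v. v + (M - b)) xb"
  have "u < v" if "u \<in> set xa" "v \<in> set ?xb" for u v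
    using M b that by fastforce
  then have "set xa \<inter> set ?xb = {}" by fastforce
  moreover obtain m where m: "\<forall>v\<in>set xa \<union> set ?xb. m < v"
    using list_strict_lower_bound[of "xa @ ?xb"] by auto
  moreover have "distinct ?xb" using assms(2) by (simp add: distinct_map inj_on_def)
  ultimately have "distinct (xa @ m # ?xb)" using assms(1) by fastforce
  then show thesis using m that by blast
qed

lemma cart_off_glue:
  assumes "\<forall>v\<in>set xa \<union> set (map (\<lambda>v. v + c) xb). m < v" "distinct xb"
  shows "cart_off (xa @ m # map (\<lambda>v. v + c) xb) off
    = Node (cart_off xa off) (off + length xa + 1) (cart_off xb (off + length xa + 1))"
  using cart_off_append_min[OF assms(1)] cart_off_map_strict_mono[OF strict_mono_add assms(2)] by simp

lemma cart_realizable_Node: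
  assumes "cart_realizable off l" "cart_realizable (off + size l + 1) r"
  shows "cart_realizable off (Node l (off + size l + 1) r)"
proof -
  obtain xl xr where "distinct xl" "cart_off xl off = l" "distinct xr" "cart_off xr (off + size l + 1) = r"
    using assms unfolding cart_realizable_def by blast
  moreover obtain c m where "distinct (xl @ m # map (\<lambda>v. v + c) xr)"
    "\<forall>v\<in>set xl \<union> set (map (\<lambda>v. v + c) xr). m < v"
    using distinct_glue \<open>distinct xl\<close> \<open>distinct xr\<close> by blast
  ultimately show ?thesis unfolding cart_realizable_def
    by (metis cart_off_glue size_cart_off)
qed

text \<open>Two sequences sharing one value, the last of the first and the first of the second, can be
  merged up to order isomorphism: scaling the second by a large N leaves room around N b for a
  translate of the first.\<close>
lemma distinct_interleave:
  fixes xs ys :: "int list"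
  assumes "distinct (xs @ [a])" "distinct (b # ys)"
  obtains f g :: "int \<Rightarrow> int" where "strict_mono f" "strict_mono g" "f a = g b"
    "distinct (map f xs @ g b # map g ys)"
proof -
  obtain B where B: "\<forall>v\<in>set xs. \<bar>v - a\<bar> \<le> B"
    using bdd_above_finite[of "(\<lambda>v. \<bar>v - a\<bar>) ` set xs"] by (auto simp: bdd_above_def)
  define N where "N = max B 0 + 1"
  have N: "N > 0" "\<forall>v\<in>set xs. \<bar>v - a\<bar> < N" using B unfolding N_def by fastforce+
  define f where "f = (\<lambda>v. v + (N * b - a))"
  define g where "g = (\<lambda>v. N * v)"
  have sep: "f v \<noteq> g u" if "v \<in> set xs" for v u
  proof
    assume "f v = g u"
    then have e: "v - a = N * (u - b)" unfolding f_def g_def by (simp add: algebra_simps)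
    show False
    proof (cases "u = b")
      case True
      then show False using e that assms(1) by auto
    next
      case False
      then have "N * 1 \<le> N * \<bar>u - b\<bar>" using N(1) by (intro mult_left_mono) auto
      moreover have "\<bar>v - a\<bar> = N * \<bar>u - b\<bar>" using e N(1) by (simp add: abs_mult)
      moreover have "\<bar>v - a\<bar> < N" using N(2) that by blast
      ultimately show False by linarith
    qed
  qed
  have "strict_mono f" "strict_mono g" using N(1) by (auto simp: strict_mono_def f_def g_def)
  moreover have "distinct (map f xs @ g b # map g ys)"
    using assms sep calculation by (auto simp: distinct_map strict_mono_eq inj_on_def) (metis sep)
  moreover have "f a = g b" unfolding f_def g_def by simp
  ultimately show thesis using that by blast
qed

definition snoc_trees :: "nat \<Rightarrow> nat tree \<Rightarrow> nat tree set" where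
  "snoc_trees off l = {cart_off (xl @ [y]) off | xl y. distinct (xl @ [y]) \<and> cart_off xl off = l}"

definition cons_trees :: "nat \<Rightarrow> nat tree \<Rightarrow> nat tree set" where
  "cons_trees off r = {cart_off (y # xr) off | y xr. distinct (y # xr) \<and> cart_off xr (Suc off) = r}"

lemma snoc_trees_Leaf: "snoc_trees off Leaf = {Node Leaf (Suc off) Leaf}"
  using cart_off_Cons_min[of "[]"] by (auto simp: snoc_trees_def cart_off_eq_Leaf_iff)

lemma cons_trees_Leaf: "cons_trees off Leaf = {Node Leaf (Suc off) Leaf}"
  using cart_off_Cons_min[of "[]"] by (auto simp: cons_trees_def cart_off_eq_Leaf_iff)

lemma Node_Leaf_in_snoc_trees:
  assumes "cart_realizable off T"
  shows "Node T (off + size T + 1) Leaf \<in> snoc_trees off T"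
proof -
  obtain x where d: "distinct x" and c: "cart_off x off = T"
    using assms unfolding cart_realizable_def by blast
  obtain y where y: "\<forall>v\<in>set x. y < v" using list_strict_lower_bound by blast
  have "Node T (off + size T + 1) Leaf = cart_off (x @ [y]) off"
    using cart_off_snoc_min[OF y] c size_cart_off[OF d, of off] by simp
  moreover have "distinct (x @ [y])" using d y by auto
  ultimately show ?thesis unfolding snoc_trees_def using c by blast
qed

lemma Node_Leaf_in_cons_trees:
  assumes "cart_realizable (Suc off) T"
  shows "Node Leaf (Suc off) T \<in> cons_trees off T"
proof -
  obtain x where d: "distinct x" and c: "cart_off x (Suc off) = T"
    using assms unfolding cart_realizable_def by blast
  obtain y where y: "\<forall>v\<in>set x. y < v" using list_strict_lower_bound by blast
  have "Node Leaf (Suc off) T = cart_off (y # x) off" using cart_off_Cons_min[OF y] c by simp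
  moreover have "distinct (y # x)" using d y by auto
  ultimately show ?thesis unfolding cons_trees_def using c by blast
qed

lemma snoc_trees_Node_subset:
  "snoc_trees off (Node a j b)
    \<subseteq> insert (Node (Node a j b) (j + size b + 1) Leaf) (Node a j ` snoc_trees j b)"
proof
  fix t assume "t \<in> snoc_trees off (Node a j b)"
  then obtain x y where t: "t = cart_off (x @ [y]) off" and d: "distinct (x @ [y])"
    and c: "cart_off x off = Node a j b" unfolding snoc_trees_def by blast
  then obtain xa m xb where x: "x = xa @ m # xb" and min: "\<forall>v\<in>set xa \<union> set xb. m < v"
    and ca: "cart_off xa off = a" and j: "j = off + length xa + 1" and cb: "cart_off xb j = b"
    by (auto elim: cart_off_eq_NodeE)
  consider "y < m" | "m < y" using d x by fastforce
  then show "t \<in> insert (Node (Node a j b) (j + size b + 1) Leaf) (Node a j ` snoc_trees j b)"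
  proof cases
    case 1
    then have "\<forall>v\<in>set x. y < v" using min unfolding x by (auto intro: less_trans)
    then have "t = Node (Node a j b) (off + length x + 1) Leaf" using t c cart_off_snoc_min by simp
    moreover have "off + length x + 1 = j + size b + 1"
      using size_cart_off[of xb j] d x cb j by simp
    ultimately show ?thesis by simp
  next
    case 2
    then have "t = Node a j (cart_off (xb @ [y]) j)"
      using t x ca j min cart_off_append_min[of xa "xb @ [y]" m off] by simp
    moreover have "cart_off (xb @ [y]) j \<in> snoc_trees j b" unfolding snoc_trees_def using d x cb by auto
    ultimately show ?thesis by simp
  qed
qed

lemma snoc_trees_Node:
  assumes "cart_realizable off a" "cart_realizable j b" "j = off + size a + 1"
  shows "snoc_trees off (Node a j b)
    = insert (Node (Node a j b) (j + size b + 1) Leaf) (Node a j ` snoc_trees j b)"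
proof
  have "Node (Node a j b) (j + size b + 1) Leaf \<in> snoc_trees off (Node a j b)"
    using Node_Leaf_in_snoc_trees[of off "Node a j b"] cart_realizable_Node[of off a b] assms
    by (simp add: ac_simps)
  moreover have "Node a j t \<in> snoc_trees off (Node a j b)" if t_in: "t \<in> snoc_trees j b" for t
  proof -
    obtain xb y where t: "t = cart_off (xb @ [y]) j" and d: "distinct (xb @ [y])"
      and cb: "cart_off xb j = b" using t_in unfolding snoc_trees_def by blast
    obtain xa where da: "distinct xa" and ca: "cart_off xa off = a"
      using assms(1) unfolding cart_realizable_def by blast
    obtain c m where dx: "distinct (xa @ m # map (\<lambda>v. v + c) (xb @ [y]))"
      and min: "\<forall>v\<in>set xa \<union> set (map (\<lambda>v. v + c) (xb @ [y])). m < v"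
      using distinct_glue[OF da d] by blast
    have j: "j = off + length xa + 1" using assms(3) size_cart_off[OF da, of off] ca by simp
    have "cart_off (xa @ m # map (\<lambda>v. v + c) xb) off = Node a j b"
      using cart_off_glue[of xa c xb m off] min d ca cb j by simp
    moreover have "Node a j t = cart_off ((xa @ m # map (\<lambda>v. v + c) xb) @ [y + c]) off"
      using cart_off_glue[OF min d, of off] ca t j by simp
    moreover have "distinct ((xa @ m # map (\<lambda>v. v + c) xb) @ [y + c])" using dx by simp
    ultimately show ?thesis unfolding snoc_trees_def by blast
  qed
  ultimately show "insert (Node (Node a j b) (j + size b + 1) Leaf) (Node a j ` snoc_trees j b)
    \<subseteq> snoc_trees off (Node a j b)" by blast
qed (rule snoc_trees_Node_subset)

lemma cons_trees_Node_subset: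
  "cons_trees off (Node a j b)
    \<subseteq> insert (Node Leaf (Suc off) (Node a j b)) ((\<lambda>t. Node t j b) ` cons_trees off a)"
proof
  fix t assume "t \<in> cons_trees off (Node a j b)"
  then obtain x y where t: "t = cart_off (y # x) off" and d: "distinct (y # x)"
    and c: "cart_off x (Suc off) = Node a j b" unfolding cons_trees_def by blast
  then obtain xa m xb where x: "x = xa @ m # xb" and min: "\<forall>v\<in>set xa \<union> set xb. m < v"
    and ca: "cart_off xa (Suc off) = a" and j: "j = Suc off + length xa + 1" and cb: "cart_off xb j = b"
    by (auto elim: cart_off_eq_NodeE)
  consider "y < m" | "m < y" using d x by fastforce
  then show "t \<in> insert (Node Leaf (Suc off) (Node a j b)) ((\<lambda>t. Node t j b) ` cons_trees off a)"
  proof cases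
    case 1
    then have "\<forall>v\<in>set x. y < v" using min unfolding x by (auto intro: less_trans)
    then have "t = Node Leaf (Suc off) (Node a j b)" using t c cart_off_Cons_min by simp
    then show ?thesis by simp
  next
    case 2
    then have "t = Node (cart_off (y # xa) off) j b"
      using t x cb j min cart_off_append_min[of "y # xa" xb m off] by simp
    moreover have "cart_off (y # xa) off \<in> cons_trees off a" unfolding cons_trees_def using d x ca by auto
    ultimately show ?thesis by simp
  qed
qed

lemma cons_trees_Node:
  assumes "cart_realizable (Suc off) a" "cart_realizable j b" "j = Suc off + size a + 1"
  shows "cons_trees off (Node a j b)
    = insert (Node Leaf (Suc off) (Node a j b)) ((\<lambda>t. Node t j b) ` cons_trees off a)"
proof
  have "Node Leaf (Suc off) (Node a j b) \<in> cons_trees off (Node a j b)"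
    using Node_Leaf_in_cons_trees[of off "Node a j b"] cart_realizable_Node[of "Suc off" a b] assms by simp
  moreover have "Node t j b \<in> cons_trees off (Node a j b)" if t_in: "t \<in> cons_trees off a" for t
  proof -
    obtain xa y where t: "t = cart_off (y # xa) off" and d: "distinct (y # xa)"
      and ca: "cart_off xa (Suc off) = a" using t_in unfolding cons_trees_def by blast
    obtain xb where db: "distinct xb" and cb: "cart_off xb j = b"
      using assms(2) unfolding cart_realizable_def by blast
    obtain c m where dx: "distinct ((y # xa) @ m # map (\<lambda>v. v + c) xb)"
      and min: "\<forall>v\<in>set (y # xa) \<union> set (map (\<lambda>v. v + c) xb). m < v"
      using distinct_glue[OF d db] by blast
    have j: "j = Suc off + length xa + 1" using assms(3) size_cart_off[of xa "Suc off"] d ca by simp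
    have "cart_off (xa @ m # map (\<lambda>v. v + c) xb) (Suc off) = Node a j b"
      using cart_off_glue[of xa c xb m "Suc off"] min db ca cb j by simp
    moreover have "Node t j b = cart_off (y # xa @ m # map (\<lambda>v. v + c) xb) off"
      using cart_off_glue[OF min db, of off] cb t j by simp
    moreover have "distinct (y # xa @ m # map (\<lambda>v. v + c) xb)" using dx by simp
    ultimately show ?thesis unfolding cons_trees_def by blast
  qed
  ultimately show "insert (Node Leaf (Suc off) (Node a j b)) ((\<lambda>t. Node t j b) ` cons_trees off a)
    \<subseteq> cons_trees off (Node a j b)" by blast
qed (rule cons_trees_Node_subset)

text \<open>ng_i and ng for sequences whose positions are shifted by off, the form in which the two
  subtrees of a Cartesian tree occur.\<close>
definition ng_i_off :: "nat \<Rightarrow> nat tree \<Rightarrow> nat \<Rightarrow> nat tree set" where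
  "ng_i_off off T i = {cart_off (tau x i) off | x. distinct x \<and> cart_off x off = T}"

definition ng_off :: "nat \<Rightarrow> nat tree \<Rightarrow> nat tree set" where
  "ng_off off T = (\<Union>i\<in>{1..size T - 1}. ng_i_off off T i)"

lemma ng_eq_ng_off: "ng T = ng_off 0 T"
  by (simp add: ng_def ng_off_def ng_i_def ng_i_off_def cart_def)

lemma notin_ng_off: "T \<notin> ng_off off T"
proof
  assume "T \<in> ng_off off T"
  then obtain i x where "1 \<le> i" "i \<le> size T - 1" "distinct x" "cart_off x off = T"
    "cart_off (tau x i) off = T" unfolding ng_off_def ng_i_off_def by auto
  moreover from calculation have "i < length x" using size_cart_off by fastforce
  ultimately show False using cart_off_tau_neq by metis
qed

lemma ng_i_off_Node_left:
  assumes "cart_realizable k r" "k = off + size l + 1" "1 \<le> i" "i < size l"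
  shows "ng_i_off off (Node l k r) i = (\<lambda>t. Node t k r) ` ng_i_off off l i"
proof (intro equalityI subsetI)
  fix t assume "t \<in> ng_i_off off (Node l k r) i"
  then obtain x where t: "t = cart_off (tau x i) off" and d: "distinct x"
    and c: "cart_off x off = Node l k r" unfolding ng_i_off_def by blast
  then obtain xl m xr where x: "x = xl @ m # xr" and min: "\<forall>v\<in>set xl \<union> set xr. m < v"
    and cl: "cart_off xl off = l" and k: "k = off + length xl + 1" and cr: "cart_off xr k = r"
    by (auto elim: cart_off_eq_NodeE)
  have "t = Node (cart_off (tau xl i) off) k r"
    using t x cart_off_tau_left[OF min] assms(2-4) k cr by simp
  moreover have "cart_off (tau xl i) off \<in> ng_i_off off l i" unfolding ng_i_off_def using d x cl by auto
  ultimately show "t \<in> (\<lambda>t. Node t k r) ` ng_i_off off l i" by blast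
next
  fix t assume "t \<in> (\<lambda>t. Node t k r) ` ng_i_off off l i"
  then obtain xl where t: "t = Node (cart_off (tau xl i) off) k r" and dl: "distinct xl"
    and cl: "cart_off xl off = l" unfolding ng_i_off_def by blast
  obtain xr where dr: "distinct xr" and cr: "cart_off xr k = r"
    using assms(1) unfolding cart_realizable_def by blast
  obtain c m where dx: "distinct (xl @ m # map (\<lambda>v. v + c) xr)"
    and min: "\<forall>v\<in>set xl \<union> set (map (\<lambda>v. v + c) xr). m < v"
    using distinct_glue[OF dl dr] by blast
  have lx: "length xl = size l" using size_cart_off[OF dl, of off] cl by simp
  have "cart_off (xl @ m # map (\<lambda>v. v + c) xr) off = Node l k r"
    using cart_off_glue[OF min dr] cl cr lx assms(2) by simp
  moreover have "cart_off (tau (xl @ m # map (\<lambda>v. v + c) xr) i) off = t"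
    using cart_off_tau_left[OF min] assms(2-4) lx t cr cart_off_map_strict_mono[OF strict_mono_add dr]
    by simp
  ultimately show "t \<in> ng_i_off off (Node l k r) i" unfolding ng_i_off_def using dx by blast
qed

lemma ng_i_off_Node_right:
  assumes "cart_realizable off l" "k = off + size l + 1" "1 \<le> j" "j < size r"
  shows "ng_i_off off (Node l k r) (size l + 1 + j) = Node l k ` ng_i_off k r j"
proof (intro equalityI subsetI)
  fix t assume "t \<in> ng_i_off off (Node l k r) (size l + 1 + j)"
  then obtain x where t: "t = cart_off (tau x (size l + 1 + j)) off" and d: "distinct x"
    and c: "cart_off x off = Node l k r" unfolding ng_i_off_def by blast
  then obtain xl m xr where x: "x = xl @ m # xr" and min: "\<forall>v\<in>set xl \<union> set xr. m < v"
    and cl: "cart_off xl off = l" and k: "k = off + length xl + 1" and cr: "cart_off xr k = r"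
    by (auto elim: cart_off_eq_NodeE)
  have "length xr = size r" using size_cart_off[of xr k] d x cr by simp
  then have "t = Node l k (cart_off (tau xr j) k)"
    using t x cart_off_tau_right[OF min] assms(2-4) k cl by simp
  moreover have "cart_off (tau xr j) k \<in> ng_i_off k r j" unfolding ng_i_off_def using d x cr by auto
  ultimately show "t \<in> Node l k ` ng_i_off k r j" by blast
next
  fix t assume "t \<in> Node l k ` ng_i_off k r j"
  then obtain xr where t: "t = Node l k (cart_off (tau xr j) k)" and dr: "distinct xr"
    and cr: "cart_off xr k = r" unfolding ng_i_off_def by blast
  obtain xl where dl: "distinct xl" and cl: "cart_off xl off = l"
    using assms(1) unfolding cart_realizable_def by blast
  obtain c m where dx: "distinct (xl @ m # map (\<lambda>v. v + c) xr)"
    and min: "\<forall>v\<in>set xl \<union> set (map (\<lambda>v. v + c) xr). m < v"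
    using distinct_glue[OF dl dr] by blast
  have lx: "length xl = size l" using size_cart_off[OF dl, of off] cl by simp
  have lr: "j < length xr" using size_cart_off[OF dr, of k] cr assms(4) by simp
  have "cart_off (xl @ m # map (\<lambda>v. v + c) xr) off = Node l k r"
    using cart_off_glue[OF min dr] cl cr lx assms(2) by simp
  moreover have "cart_off (tau (xl @ m # map (\<lambda>v. v + c) xr) (size l + 1 + j)) off = t"
    using cart_off_tau_right[OF min] assms(2,3) lx lr t cl map_tau[OF lr]
      cart_off_map_strict_mono[OF strict_mono_add] distinct_tau[OF assms(3) lr] dr
    by simp
  ultimately show "t \<in> ng_i_off off (Node l k r) (size l + 1 + j)" unfolding ng_i_off_def using dx by blast
qed

lemma ng_i_off_Node_before_root_subset:
  assumes "k = off + size l + 1" "l \<noteq> Leaf"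
  shows "ng_i_off off (Node l k r) (size l) \<subseteq> Node (del_rightmost l) (k - 1) ` cons_trees (k - 1) r"
proof
  fix t assume "t \<in> ng_i_off off (Node l k r) (size l)"
  then obtain x where t: "t = cart_off (tau x (size l)) off" and d: "distinct x"
    and c: "cart_off x off = Node l k r" unfolding ng_i_off_def by blast
  then obtain xl m xr where x: "x = xl @ m # xr" and min: "\<forall>v\<in>set xl \<union> set xr. m < v"
    and cl: "cart_off xl off = l" and k: "k = off + length xl + 1" and cr: "cart_off xr k = r"
    by (auto elim: cart_off_eq_NodeE)
  have xl: "xl \<noteq> []" "length xl = size l" using cl assms k by (auto simp: cart_off_eq_Leaf_iff)
  then have "t = Node (del_rightmost l) (k - 1) (cart_off (last xl # xr) (k - 1))"
    using t x cart_off_tau_before_min[OF min] d cl k by simp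
  moreover have "cart_off (last xl # xr) (k - 1) \<in> cons_trees (k - 1) r"
  proof -
    have "distinct (last xl # xr)" using d last_in_set[OF xl(1)] unfolding x by auto
    moreover have "cart_off xr (Suc (k - 1)) = r" using cr k by simp
    ultimately show ?thesis unfolding cons_trees_def by blast
  qed
  ultimately show "t \<in> Node (del_rightmost l) (k - 1) ` cons_trees (k - 1) r" by blast
qed

lemma ng_i_off_Node_before_root:
  assumes "cart_realizable off l" "k = off + size l + 1" "l \<noteq> Leaf"
  shows "ng_i_off off (Node l k r) (size l) = Node (del_rightmost l) (k - 1) ` cons_trees (k - 1) r"
proof (rule equalityI[OF ng_i_off_Node_before_root_subset[OF assms(2,3)]], rule subsetI)
  fix t assume "t \<in> Node (del_rightmost l) (k - 1) ` cons_trees (k - 1) r"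
  then obtain y xr where t: "t = Node (del_rightmost l) (k - 1) (cart_off (y # xr) (k - 1))"
    and dr: "distinct (y # xr)" and cr: "cart_off xr k = r" unfolding cons_trees_def using assms(2) by auto
  obtain xl where dl: "distinct xl" and cl: "cart_off xl off = l"
    using assms(1) unfolding cart_realizable_def by blast
  have xl: "xl \<noteq> []" "length xl = size l"
    using cl assms(3) size_cart_off[OF dl, of off] by (auto simp: cart_off_eq_Leaf_iff)
  have bl: "butlast xl @ [last xl] = xl" by (rule append_butlast_last_id[OF xl(1)])
  then have "distinct (butlast xl @ [last xl])" using dl by simp
  then obtain f g :: "int \<Rightarrow> int" where f: "strict_mono f" and g: "strict_mono g" and fg: "f (last xl) = g y"
    and dfg: "distinct (map f (butlast xl) @ g y # map g xr)"
    using distinct_interleave dr by blast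
  have "map f xl = map f (butlast xl @ [last xl])" using bl by simp
  then have fxl: "map f xl = map f (butlast xl) @ [g y]" using fg by simp
  obtain m where min: "\<forall>v\<in>set (map f xl) \<union> set (map g xr). m < v"
    using list_strict_lower_bound[of "map f xl @ map g xr"] by auto
  let ?x = "map f xl @ m # map g xr"
  have "distinct ?x" using dfg min fxl by auto
  moreover have "cart_off ?x off = Node l k r"
    using cart_off_append_min[OF min] cart_off_map_strict_mono f g dl dr cl cr xl(2) assms(2) by simp
  moreover have "cart_off (tau ?x (size l)) off = t"
  proof -
    have "last (map f xl) # map g xr = map g (y # xr)" using fxl by simp
    then show ?thesis
      using cart_off_tau_before_min[OF min] cart_off_map_strict_mono[OF f dl]
        cart_off_map_strict_mono[OF g dr] dl cl xl assms(2) t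
      by (simp add: distinct_map strict_mono_imp_inj_on f)
  qed
  ultimately show "t \<in> ng_i_off off (Node l k r) (size l)" unfolding ng_i_off_def by blast
qed

lemma ng_i_off_Node_after_root_subset:
  assumes "k = off + size l + 1" "r \<noteq> Leaf"
  shows "ng_i_off off (Node l k r) (size l + 1)
    \<subseteq> (\<lambda>t. Node t (k + 1) (del_leftmost r)) ` snoc_trees off l"
proof
  fix t assume "t \<in> ng_i_off off (Node l k r) (size l + 1)"
  then obtain x where t: "t = cart_off (tau x (size l + 1)) off" and d: "distinct x"
    and c: "cart_off x off = Node l k r" unfolding ng_i_off_def by blast
  then obtain xl m xr where x: "x = xl @ m # xr" and min: "\<forall>v\<in>set xl \<union> set xr. m < v"
    and cl: "cart_off xl off = l" and k: "k = off + length xl + 1" and cr: "cart_off xr k = r"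
    by (auto elim: cart_off_eq_NodeE)
  have xr: "xr \<noteq> []" and lx: "length xl = size l" using cr assms k by (auto simp: cart_off_eq_Leaf_iff)
  then have "t = Node (cart_off (xl @ [hd xr]) off) (k + 1) (del_leftmost r)"
    using t x cart_off_tau_after_min[OF min] d cr k by simp
  moreover have "cart_off (xl @ [hd xr]) off \<in> snoc_trees off l"
  proof -
    have "distinct (xl @ [hd xr])" using d hd_in_set[OF xr] unfolding x by auto
    then show ?thesis unfolding snoc_trees_def using cl by blast
  qed
  ultimately show "t \<in> (\<lambda>t. Node t (k + 1) (del_leftmost r)) ` snoc_trees off l" by blast
qed

lemma ng_i_off_Node_after_root:
  assumes "cart_realizable k r" "k = off + size l + 1" "r \<noteq> Leaf"
  shows "ng_i_off off (Node l k r) (size l + 1)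
    = (\<lambda>t. Node t (k + 1) (del_leftmost r)) ` snoc_trees off l"
proof (rule equalityI[OF ng_i_off_Node_after_root_subset[OF assms(2,3)]], rule subsetI)
  fix t assume "t \<in> (\<lambda>t. Node t (k + 1) (del_leftmost r)) ` snoc_trees off l"
  then obtain xl y where t: "t = Node (cart_off (xl @ [y]) off) (k + 1) (del_leftmost r)"
    and dl: "distinct (xl @ [y])" and cl: "cart_off xl off = l" unfolding snoc_trees_def by blast
  obtain xr where dr: "distinct xr" and cr: "cart_off xr k = r"
    using assms(1) unfolding cart_realizable_def by blast
  have xr: "xr \<noteq> []" using cr assms(3) by (auto simp: cart_off_eq_Leaf_iff)
  have lx: "length xl = size l" using size_cart_off[of xl off] dl cl by simp
  have ht: "hd xr # tl xr = xr" by (rule list.collapse[OF xr])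
  then have "distinct (hd xr # tl xr)" using dr by simp
  then obtain f g :: "int \<Rightarrow> int" where f: "strict_mono f" and g: "strict_mono g" and fg: "f y = g (hd xr)"
    and dfg: "distinct (map f xl @ g (hd xr) # map g (tl xr))"
    using distinct_interleave dl by blast
  have "map g xr = map g (hd xr # tl xr)" using ht by simp
  then have gxr: "map g xr = g (hd xr) # map g (tl xr)" by simp
  obtain m where min: "\<forall>v\<in>set (map f xl) \<union> set (map g xr). m < v"
    using list_strict_lower_bound[of "map f xl @ map g xr"] by auto
  let ?x = "map f xl @ m # map g xr"
  have "distinct ?x" using dfg min gxr by auto
  moreover have "cart_off ?x off = Node l k r"
    using cart_off_append_min[OF min] cart_off_map_strict_mono f g dl dr cl cr lx assms(2) by simp
  moreover have "cart_off (tau ?x (size l + 1)) off = t"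
  proof -
    have "map f xl @ [hd (map g xr)] = map f (xl @ [y])" using gxr fg by simp
    then show ?thesis
      using cart_off_tau_after_min[OF min] cart_off_map_strict_mono[OF f dl]
        cart_off_map_strict_mono[OF g dr] dr cr lx assms(2) t xr
      by (simp add: distinct_map strict_mono_imp_inj_on g)
  qed
  ultimately show "t \<in> ng_i_off off (Node l k r) (size l + 1)" unfolding ng_i_off_def by blast
qed

lemma UN_atLeastAtMost_split:
  fixes F :: "nat \<Rightarrow> 'a set"
  assumes "1 \<le> a" "1 \<le> b"
  shows "(\<Union>i\<in>{1..a + b}. F i)
    = (\<Union>i\<in>{1..a - 1}. F i) \<union> F a \<union> F (a + 1) \<union> (\<Union>j\<in>{1..b - 1}. F (a + 1 + j))"
proof -
  have "(\<lambda>j. a + 1 + j) ` {1..b - 1} = {a + 2..a + b}"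
    using assms image_add_atLeastAtMost[of "a + 1" 1 "b - 1"] by (simp add: add.commute)
  then have "{1..a + b} = {1..a - 1} \<union> {a} \<union> {a + 1} \<union> (\<lambda>j. a + 1 + j) ` {1..b - 1}"
    using assms by auto
  then show ?thesis by (simp add: image_image Un_ac)
qed

lemma ng_off_Node:
  assumes "cart_realizable off l" "cart_realizable k r" "k = off + size l + 1" "l \<noteq> Leaf" "r \<noteq> Leaf"
  shows "ng_off off (Node l k r) = (\<lambda>t. Node t k r) ` ng_off off l
    \<union> Node (del_rightmost l) (k - 1) ` cons_trees (k - 1) r
    \<union> (\<lambda>t. Node t (k + 1) (del_leftmost r)) ` snoc_trees off l
    \<union> Node l k ` ng_off k r"
proof -
  let ?F = "ng_i_off off (Node l k r)"
  have "1 \<le> size l" "1 \<le> size r" using assms(4,5) by (auto simp: neq_Leaf_iff)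
  then have "ng_off off (Node l k r)
    = (\<Union>i\<in>{1..size l - 1}. ?F i) \<union> ?F (size l) \<union> ?F (size l + 1)
      \<union> (\<Union>j\<in>{1..size r - 1}. ?F (size l + 1 + j))"
    unfolding ng_off_def using UN_atLeastAtMost_split[of "size l" "size r" ?F] by simp
  moreover have "(\<Union>i\<in>{1..size l - 1}. ?F i) = (\<lambda>t. Node t k r) ` ng_off off l"
    unfolding ng_off_def image_UN using ng_i_off_Node_left[OF assms(2,3)] by (intro SUP_cong) auto
  moreover have "(\<Union>j\<in>{1..size r - 1}. ?F (size l + 1 + j)) = Node l k ` ng_off k r"
    unfolding ng_off_def image_UN using ng_i_off_Node_right[OF assms(1,3)] by (intro SUP_cong) auto
  ultimately show ?thesis
    using ng_i_off_Node_before_root[OF assms(1,3,4)] ng_i_off_Node_after_root[OF assms(2,3,5)] by simp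
qed

lemma card_ng_off_Node:
  assumes "cart_realizable off l" "cart_realizable k r" "k = off + size l + 1" "l \<noteq> Leaf" "r \<noteq> Leaf"
    and "finite (ng_off off l)" "finite (ng_off k r)" "finite (cons_trees (k - 1) r)" "finite (snoc_trees off l)"
  shows "card (ng_off off (Node l k r)) = card (ng_off off l) + card (cons_trees (k - 1) r)
    + card (snoc_trees off l) + card (ng_off k r)"
proof -
  let ?L = "(\<lambda>t. Node t k r) ` ng_off off l"
  let ?A = "Node (del_rightmost l) (k - 1) ` cons_trees (k - 1) r"
  let ?B = "(\<lambda>t. Node t (k + 1) (del_leftmost r)) ` snoc_trees off l"
  let ?R = "Node l k ` ng_off k r"
  have "?L \<inter> ?R = {}" using notin_ng_off[of l off] by auto
  moreover have "?L \<inter> ?A = {}" "(?L \<union> ?A) \<inter> ?B = {}" "?A \<inter> ?R = {}" "?B \<inter> ?R = {}"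
    using assms(3) by auto
  ultimately have "card (?L \<union> ?A \<union> ?B \<union> ?R) = card ?L + card ?A + card ?B + card ?R"
    using assms(6-9) by (simp add: card_Un_disjoint Int_Un_distrib2)
  also have "\<dots> = card (ng_off off l) + card (cons_trees (k - 1) r) + card (snoc_trees off l) + card (ng_off k r)"
    by (simp add: card_image inj_on_def)
  finally show ?thesis using ng_off_Node[OF assms(1-5)] by simp
qed

lemma size_cbt: "size (cbt n off) = 2 ^ n - 1"
proof (induction n arbitrary: off)
  case (Suc n)
  have "(1::nat) \<le> 2 ^ n" by simp
  then show ?case using Suc by (simp; linarith)
qed simp

lemma cart_realizable_cbt: "cart_realizable off (cbt n off)"
proof (induction n arbitrary: off)
  case 0
  show ?case unfolding cart_realizable_def by (auto intro: exI[of _ "[]"])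
next
  case (Suc n)
  then show ?case using cart_realizable_Node[of off "cbt n off"] by (simp add: size_cbt)
qed

lemma card_snoc_trees_cbt: "card (snoc_trees off (cbt n off)) = Suc n"
proof (induction n arbitrary: off)
  case 0
  then show ?case by (simp add: snoc_trees_Leaf)
next
  case (Suc n)
  let ?j = "off + 2 ^ n"
  let ?a = "cbt n off" and ?b = "cbt n ?j"
  have "snoc_trees off (Node ?a ?j ?b)
    = insert (Node (Node ?a ?j ?b) (?j + size ?b + 1) Leaf) (Node ?a ?j ` snoc_trees ?j ?b)"
    by (rule snoc_trees_Node) (simp_all add: cart_realizable_cbt size_cbt)
  moreover have "Node (Node ?a ?j ?b) (?j + size ?b + 1) Leaf \<notin> Node ?a ?j ` snoc_trees ?j ?b" by auto
  moreover have "finite (snoc_trees ?j ?b)" using Suc[of ?j] by (simp add: card_ge_0_finite)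
  ultimately show ?case using Suc[of ?j] by (simp add: card_image inj_on_def)
qed

lemma card_cons_trees_cbt: "card (cons_trees off (cbt n (Suc off))) = Suc n"
proof (induction n)
  case 0
  then show ?case by (simp add: cons_trees_Leaf)
next
  case (Suc n)
  let ?j = "Suc off + 2 ^ n"
  let ?a = "cbt n (Suc off)" and ?b = "cbt n ?j"
  have "cons_trees off (Node ?a ?j ?b)
    = insert (Node Leaf (Suc off) (Node ?a ?j ?b)) ((\<lambda>t. Node t ?j ?b) ` cons_trees off ?a)"
    by (rule cons_trees_Node) (simp_all add: cart_realizable_cbt size_cbt)
  moreover have "Node Leaf (Suc off) (Node ?a ?j ?b) \<notin> (\<lambda>t. Node t ?j ?b) ` cons_trees off ?a" by auto
  moreover have "finite (cons_trees off ?a)" using Suc by (simp add: card_ge_0_finite)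
  ultimately show ?case using Suc by (simp add: card_image inj_on_def)
qed

lemma card_ng_off_cbt:
  "finite (ng_off off (cbt (Suc h) off))
    \<and> int (card (ng_off off (cbt (Suc h) off))) = 6 * 2 ^ h - 6 - 2 * int h"
proof (induction h arbitrary: off)
  case 0
  then show ?case by (simp add: ng_off_def)
next
  case (Suc h)
  let ?k = "off + 2 ^ Suc h"
  let ?l = "cbt (Suc h) off" and ?r = "cbt (Suc h) ?k"
  have real: "cart_realizable off ?l" "cart_realizable ?k ?r" by (rule cart_realizable_cbt)+
  have "(1::nat) \<le> 2 ^ Suc h" by (rule one_le_power) simp
  then have k: "?k = off + size ?l + 1" "Suc (?k - 1) = ?k" unfolding size_cbt by linarith+
  have ne: "?l \<noteq> Leaf" "?r \<noteq> Leaf" by simp_all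
  have cons: "card (cons_trees (?k - 1) ?r) = Suc (Suc h)"
    using card_cons_trees_cbt[of "?k - 1" "Suc h"] k(2) by simp
  have snoc: "card (snoc_trees off ?l) = Suc (Suc h)" by (rule card_snoc_trees_cbt)
  have fin: "finite (ng_off off ?l)" "finite (ng_off ?k ?r)"
    "finite (cons_trees (?k - 1) ?r)" "finite (snoc_trees off ?l)"
    using Suc[of off] Suc[of ?k] cons snoc by (simp_all add: card_ge_0_finite)
  have "cbt (Suc (Suc h)) off = Node ?l ?k ?r" by simp
  moreover have "finite (ng_off off (Node ?l ?k ?r))"
    using ng_off_Node[OF real k(1) ne] fin by simp
  moreover have "card (ng_off off (Node ?l ?k ?r))
      = card (ng_off off ?l) + Suc (Suc h) + Suc (Suc h) + card (ng_off ?k ?r)"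
    using card_ng_off_Node[OF real k(1) ne fin] cons snoc by simp
  ultimately show ?case using Suc[of off] Suc[of ?k] by (simp add: algebra_simps)
qed

theorem lemma9:
  fixes h :: nat
  assumes "h > 0"
  shows "int (card (ng (cbt (h + 1) 0))) = 6 * (2 ^ h - 1) - 2 * int h"
  using card_ng_off_cbt[of 0 h] by (simp add: ng_eq_ng_off algebra_simps)

end
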